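(* Assume the standing setup below. For every $k\in\omega$ there is a $k$-enveloping embedding $\varphi:\mathbf H\to\mathbf G$.
   Context: Standing setup: $L$ is a relational language with no unary relations and with $n_i<\omega$ relations of arity $i$, named $R_{i,j}$ ($1\le j\le n_i$); $\mathbf H$ is a countable $L$-hypergraph with vertex set $\omega$, universal for all countable $L$-hypergraphs (an $L$-hypergraph: all relations injective and symmetric, each set of vertices in at most one relation; embeddings are monotone w.r.t. the enumerations). Let $\mu$ be the largest integer with $n_\mu>0$ (or $\omega$ if none). The signature $\sigma=(\sigma_1,\sigma_2,\dots)$ is $\sigma_i=n_{i+1}+2$ if $i<\mu$ and $\sigma_i=1$ otherwise; $\sigma^{(i)}_j=\sigma_{j+i}$. $I^n_\ell$ denotes the set of tuples $(i_0,\dots,i_{\ell-1})$ with $n>i_0>\dots>i_{\ell-1}\ge0$ and $I^n_{<\omega}=\bigcup_{\ell\ge1}I^n_\ell$; a $\sigma$-valuation function of level $n$ is $f:I^n_{<\omega}\to\omega$ with $f(\bar x)<\sigma_\ell$ for $\bar x\in I^n_\ell$, $|f|=n$. $\mathbf T=(T_0,T_1,\dots)$ with $T_i$ the tree of $\sigma^{(i)}$-valuation functions of finite level ordered by inclusion. $\mathbf G$ is the $L$-hypergraph with vertex set $T_0$ in which, for $x_0,\dots,x_{i-1}\in T_0$ with $|x_0|>\dots>|x_{i-1}|$ ($i\ge2$), $\{x_0,\dots,x_{i-1}\}\in R_{i,j}^{\mathbf G}$ iff $x_0(|x_1|,\dots,|x_{i-1}|)=j$ (and no other sets are related), enumerated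 by: $f\le g$ iff $|f|<|g|$, or $|f|=|g|$ and $f(\bar x)<g(\bar x)$ at the lexicographically smallest $\bar x$ where they differ. Slices: for a valuation function $f$ of level $n$ and $\bar x=(x_0,\dots,x_{m-1})$ with $n>x_0>\dots>x_{m-1}\ge0$, the $\bar x$-slice $f^{\bar x}$ is the valuation function of level $x_{m-1}$ given by $f^{\bar x}(\bar y)=f(\bar x^\frown\bar y)$; an $m$-slice is an $\bar x$-slice with $|\bar x|=m$ (the $0$-slice is $f$; $m$-slices of elements of $T_0$ are elements of $T_m$). $k$-enveloping: an embedding $\varphi:\mathbf H\to\mathbf G$ with range $R$ is $k$-enveloping if there is a partition $\omega=O\cup B$, $O\cap B=\emptyset$, such that for every $f\in R$, every $m<k$ and every $\bar x=(x_0,\dots,x_{m-1})$ for which $f^{\bar x}$ is defined: (1) if $f^{\bar x}$ is not constant zero then $x_i\in O$ for all $i$; (2) if $g\in R$ or $g$ is a constant zero valuation function, $g'$ is an $m$-slice of $g$, and $f^{\bar x}$ and $g'$ are incomparable in $T_m$, then $|f^{\bar x}\wedge g'|\in B$. *)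

theory Defs
  imports Main
begin

text \<open>The language is given by nrel :: nat => nat, nrel i = number of relations of arity i.
An L-hypergraph on vertex set V is encoded by a map E from vertex sets to labels:
E S = Some j means S (a set of i = card S vertices) belongs to R_{i,j}; None means S is
in no relation.  Injectivity and symmetry of the relations are built into this encoding.\<close>

definition is_Lhyp :: "(nat \<Rightarrow> nat) \<Rightarrow> 'a set \<Rightarrow> ('a set \<Rightarrow> nat option) \<Rightarrow> bool" where
  "is_Lhyp nrel V E \<longleftrightarrow>
     (\<forall>S. E S \<noteq> None \<longrightarrow>
        S \<subseteq> V \<and> finite S \<and> 2 \<le> card S \<and> 1 \<le> the (E S) \<and> the (E S) \<le> nrel (card S))"

text \<open>H (vertex set omega) is universal: every countable L-hypergraph (vertex set a subset of
omega, enumerated increasingly) embeds into H by an embedding monotone w.r.t. the enumerations.\<close>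

definition universal_Lhyp :: "(nat \<Rightarrow> nat) \<Rightarrow> (nat set \<Rightarrow> nat option) \<Rightarrow> bool" where
  "universal_Lhyp nrel H \<longleftrightarrow> is_Lhyp nrel (UNIV :: nat set) H \<and>
     (\<forall>(V :: nat set) E. is_Lhyp nrel V E \<longrightarrow>
        (\<exists>h. strict_mono_on V h \<and> (\<forall>S \<subseteq> V. H (h ` S) = E S)))"

text \<open>mu = largest i with nrel i > 0, or omega if there is no such largest integer.
sigma i (for i >= 1) = nrel (i+1) + 2 if i < mu, and 1 otherwise.\<close>

definition sig :: "(nat \<Rightarrow> nat) \<Rightarrow> nat \<Rightarrow> nat" where
  "sig nrel i =
     (let P = {j. 0 < nrel j} in
      if P \<noteq> {} \<and> finite P \<and> Max P \<le> i then 1 else nrel (i + 1) + 2)"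

definition dec_tuples :: "nat \<Rightarrow> nat list set" where
  "dec_tuples n = {xs. xs \<noteq> [] \<and> sorted_wrt (>) xs \<and> (\<forall>x\<in>set xs. x < n)}"

text \<open>A valuation function is represented as a pair (level, values), the values being 0 outside
the domain I^n_{<omega}, so that pair equality is equality of partial functions.\<close>

type_synonym vf = "nat \<times> (nat list \<Rightarrow> nat)"

definition valfun :: "(nat \<Rightarrow> nat) \<Rightarrow> vf \<Rightarrow> bool" where
  "valfun s v \<longleftrightarrow>
     (\<forall>xs \<in> dec_tuples (fst v). snd v xs < s (length xs)) \<and>
     (\<forall>xs. xs \<notin> dec_tuples (fst v) \<longrightarrow> snd v xs = 0)"

definition Tlev :: "(nat \<Rightarrow> nat) \<Rightarrow> nat \<Rightarrow> vf set" where
  "Tlev nrel i = {v. valfun (\<lambda>j. sig nrel (j + i)) v}"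

definition restr :: "vf \<Rightarrow> nat \<Rightarrow> vf" where
  "restr v l = (l, \<lambda>xs. if xs \<in> dec_tuples l then snd v xs else 0)"

definition vf_le :: "vf \<Rightarrow> vf \<Rightarrow> bool" where
  "vf_le a b \<longleftrightarrow> fst a \<le> fst b \<and> restr b (fst a) = a"

definition meet_level :: "vf \<Rightarrow> vf \<Rightarrow> nat" where
  "meet_level a b = (GREATEST l. l \<le> fst a \<and> l \<le> fst b \<and> restr a l = restr b l)"

definition const_zero :: "vf \<Rightarrow> bool" where
  "const_zero v \<longleftrightarrow> (\<forall>xs. snd v xs = 0)"

definition Grel :: "(nat \<Rightarrow> nat) \<Rightarrow> vf set \<Rightarrow> nat option" where
  "Grel nrel S =
     (if S \<subseteq> Tlev nrel 0 \<and> finite S \<and> 2 \<le> card S \<and> inj_on fst S then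
        (let x0 = (THE x. x \<in> S \<and> fst x = Max (fst ` S));
             tup = rev (sorted_list_of_set (fst ` (S - {x0})));
             j = snd x0 tup
         in if 1 \<le> j \<and> j \<le> nrel (card S) then Some j else None)
      else None)"

definition enum_less :: "vf \<Rightarrow> vf \<Rightarrow> bool" where
  "enum_less f g \<longleftrightarrow> fst f < fst g \<or>
     (fst f = fst g \<and> (\<exists>xs. snd f xs < snd g xs \<and>
        (\<forall>ys. (ys, xs) \<in> lexord {(a, b). a < (b::nat)} \<longrightarrow> snd f ys = snd g ys)))"

definition is_embedding :: "(nat \<Rightarrow> nat) \<Rightarrow> (nat set \<Rightarrow> nat option) \<Rightarrow> (nat \<Rightarrow> vf) \<Rightarrow> bool" where
  "is_embedding nrel H \<phi> \<longleftrightarrow>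
     (\<forall>a. \<phi> a \<in> Tlev nrel 0) \<and>
     (\<forall>a b. a < b \<longrightarrow> enum_less (\<phi> a) (\<phi> b)) \<and>
     (\<forall>S. Grel nrel (\<phi> ` S) = H S)"

definition slice_ok :: "vf \<Rightarrow> nat list \<Rightarrow> bool" where
  "slice_ok f xs \<longleftrightarrow> sorted_wrt (>) xs \<and> (\<forall>x\<in>set xs. x < fst f)"

definition slice :: "vf \<Rightarrow> nat list \<Rightarrow> vf" where
  "slice f xs = (if xs = [] then f
     else (last xs, \<lambda>ys. if ys \<in> dec_tuples (last xs) then snd f (xs @ ys) else 0))"

definition k_enveloping ::
  "(nat \<Rightarrow> nat) \<Rightarrow> (nat set \<Rightarrow> nat option) \<Rightarrow> nat \<Rightarrow> (nat \<Rightarrow> vf) \<Rightarrow> bool" where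
  "k_enveloping nrel H k \<phi> \<longleftrightarrow> is_embedding nrel H \<phi> \<and>
     (\<exists>Os Bs :: nat set. Os \<union> Bs = UNIV \<and> Os \<inter> Bs = {} \<and>
       (\<forall>f \<in> range \<phi>. \<forall>m < k. \<forall>xs. length xs = m \<and> slice_ok f xs \<longrightarrow>
          (\<not> const_zero (slice f xs) \<longrightarrow> set xs \<subseteq> Os) \<and>
          (\<forall>g ys. (g \<in> range \<phi> \<or> (g \<in> Tlev nrel 0 \<and> const_zero g)) \<longrightarrow>
                  length ys = m \<longrightarrow> slice_ok g ys \<longrightarrow>
                  \<not> vf_le (slice f xs) (slice g ys) \<longrightarrow> \<not> vf_le (slice g ys) (slice f xs) \<longrightarrow>
                  meet_level (slice f xs) (slice g ys) \<in> Bs)))"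

end

theory Submission
  imports Defs "HOL-Library.Nat_Bijection"
begin

text \<open>A vertex \<open>a\<close> of H is sent to a valuation function of even level \<open>level a\<close>; O is the set
of these levels and B its complement. On tuples of such levels the image of \<open>a\<close> takes the labels
of the corresponding hyperedges of H. In addition, for every vertex \<open>c\<close> and every potential
hyperedge that contains \<open>c\<close>, vertices below \<open>c\<close>, and the vertices fixed by a slice, an odd
position below \<open>level c\<close> records whether that hyperedge is present; since only slices of length
below k matter, such hyperedges have at most \<open>k + c + 1\<close> vertices and finitely many positions
suffice. Hence the value of a slice at a tuple starting with \<open>level c\<close> is a function of its values
at one-element tuples below \<open>level c\<close>: two slices that agree below \<open>level c\<close> agree below
\<open>level c + 1\<close>, so incomparable slices never meet at a level in O.\<close>

lemma sorted_wrt_greater_last_le: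
  "sorted_wrt (>) (xs :: nat list) \<Longrightarrow> x \<in> set xs \<Longrightarrow> last xs \<le> x"
proof (induction xs)
  case (Cons y ys)
  then show ?case by (cases "ys = []") (auto intro: less_imp_le)
qed simp

lemma sorted_wrt_greater_distinct: "sorted_wrt (>) (t :: nat list) \<Longrightarrow> distinct t"
  by (induction t) auto

lemma dec_tuples_Suc_cases:
  assumes "t \<in> dec_tuples (Suc l)" "t \<notin> dec_tuples l"
  obtains ws where "t = l # ws"
proof -
  obtain x ws where t: "t = x # ws" using assms(1) by (cases t) (auto simp: dec_tuples_def)
  have "x \<le> l" "\<forall>y\<in>set ws. y < x" using assms(1) t by (auto simp: dec_tuples_def)
  moreover have "\<not> x < l"
    using assms t \<open>\<forall>y\<in>set ws. y < x\<close> by (auto simp: dec_tuples_def)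
  ultimately show ?thesis using t that by simp
qed

lemma fst_slice: "fst (slice f xs) = (if xs = [] then fst f else last xs)"
  by (simp add: slice_def)

lemma snd_slice: "t \<in> dec_tuples (fst (slice f xs)) \<Longrightarrow> snd (slice f xs) t = snd f (xs @ t)"
  by (cases "xs = []") (auto simp: slice_def)

lemma append_in_dec_tuples_slice:
  assumes "slice_ok f xs" "t \<in> dec_tuples (fst (slice f xs))"
  shows "xs @ t \<in> dec_tuples (fst f)"
proof (cases "xs = []")
  case True then show ?thesis using assms by (simp add: slice_def)
next
  case False
  have xs: "sorted_wrt (>) xs" "\<forall>x\<in>set xs. x < fst f" using assms(1) by (auto simp: slice_ok_def)
  have t: "t \<noteq> []" "sorted_wrt (>) t" "\<forall>y\<in>set t. y < last xs"
    using assms(2) False by (auto simp: dec_tuples_def fst_slice)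
  have "\<forall>x\<in>set xs. \<forall>y\<in>set t. y < x"
    using t(3) sorted_wrt_greater_last_le[OF xs(1)] by (meson less_le_trans)
  moreover have "\<forall>y\<in>set t. y < fst f" using t(3) xs False by (meson last_in_set less_trans)
  ultimately show ?thesis unfolding dec_tuples_def using xs t False by (auto simp: sorted_wrt_append)
qed

definition vf_supported :: "vf \<Rightarrow> bool" where
  "vf_supported F \<longleftrightarrow> (\<forall>t. t \<notin> dec_tuples (fst F) \<longrightarrow> snd F t = 0)"

lemma vf_supported_slice: "vf_supported f \<Longrightarrow> vf_supported (slice f xs)"
  by (auto simp: vf_supported_def slice_def)

lemma restr_eq_iff: "restr F l = restr G l \<longleftrightarrow> (\<forall>t \<in> dec_tuples l. snd F t = snd G t)"
  unfolding restr_def by (auto simp: fun_eq_iff)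

lemma restr_fst: "vf_supported F \<Longrightarrow> restr F (fst F) = F"
  unfolding restr_def vf_supported_def by (cases F) (auto simp: fun_eq_iff)

lemma meet_level_neq:
  assumes F: "vf_supported F" and G: "vf_supported G"
    and FG: "\<not> vf_le F G" and GF: "\<not> vf_le G F"
    and propagate: "\<lbrakk>l < fst F; l < fst G; \<forall>t \<in> dec_tuples l. snd F t = snd G t\<rbrakk>
      \<Longrightarrow> \<forall>ws. l # ws \<in> dec_tuples (Suc l) \<longrightarrow> snd F (l # ws) = snd G (l # ws)"
  shows "meet_level F G \<noteq> l"
proof
  assume meet: "meet_level F G = l"
  define Q where "Q = (\<lambda>l. l \<le> fst F \<and> l \<le> fst G \<and> restr F l = restr G l)"
  have Q0: "Q 0" unfolding Q_def restr_eq_iff by (simp add: dec_tuples_def)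
  have Q_bound: "\<And>y. Q y \<Longrightarrow> y \<le> fst F" unfolding Q_def by simp
  have Ql: "Q l"
    using GreatestI_nat[of Q 0 "fst F", OF Q0 Q_bound] meet unfolding meet_level_def Q_def by simp
  have "l \<noteq> fst F"
    using Ql FG restr_fst[OF F] unfolding Q_def vf_le_def by auto
  moreover have "l \<noteq> fst G"
    using Ql GF restr_fst[OF G] unfolding Q_def vf_le_def by auto
  ultimately have less: "l < fst F" "l < fst G" using Ql unfolding Q_def by auto
  have agree: "\<forall>t \<in> dec_tuples l. snd F t = snd G t" using Ql unfolding Q_def restr_eq_iff by simp
  have "Q (Suc l)"
    unfolding Q_def restr_eq_iff
  proof (intro conjI ballI)
    show "Suc l \<le> fst F" "Suc l \<le> fst G" using less by auto
    fix t assume t: "t \<in> dec_tuples (Suc l)"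
    show "snd F t = snd G t"
    proof (cases "t \<in> dec_tuples l")
      case False
      then obtain ws where "t = l # ws" using dec_tuples_Suc_cases[OF t] by blast
      then show ?thesis using propagate[OF less agree] t by blast
    qed (use agree in simp)
  qed
  then have "Suc l \<le> l"
    using Greatest_le_nat[of Q "Suc l" "fst F", OF _ Q_bound] meet
    unfolding meet_level_def Q_def by simp
  then show False by simp
qed

lemma sig_eq_if_nrel_pos_above:
  assumes "0 < nrel s" "r < s"
  shows "sig nrel r = nrel (r + 1) + 2"
proof -
  let ?P = "{j. 0 < nrel j}"
  have "s \<in> ?P" using assms by simp
  then have "\<not> (finite ?P \<and> Max ?P \<le> r)" using assms(2) Max_ge[of ?P s] by fastforce
  then show ?thesis unfolding sig_def Let_def by auto
qed

lemma sig_pos: "0 < sig nrel r"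
  unfolding sig_def Let_def by auto

locale enveloping_construction =
  fixes nrel :: "nat \<Rightarrow> nat" and H :: "nat set \<Rightarrow> nat option" and k :: nat
  assumes is_Lhyp_H: "is_Lhyp nrel UNIV H"
begin

definition arity_bound :: "nat \<Rightarrow> nat" where
  "arity_bound c = Max (nrel ` {..k + c + 1})"

definition code :: "nat \<Rightarrow> nat set \<Rightarrow> nat \<Rightarrow> nat" where
  "code c A j = prod_encode (c, prod_encode (set_encode A, j))"

definition code_bound :: "nat \<Rightarrow> nat" where
  "code_bound c = Max ((\<lambda>(A, j). code c A j) ` (Pow {..<c} \<times> {..arity_bound c}))"

definition level :: "nat \<Rightarrow> nat" where
  "level c = 2 * (\<Sum>i\<le>c. Suc (code_bound i))"

definition marker :: "nat \<Rightarrow> nat set \<Rightarrow> nat \<Rightarrow> nat" where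
  "marker c A j = 2 * code c A j + 1"

definition marker_vertex :: "nat \<Rightarrow> nat" where
  "marker_vertex b = fst (prod_decode (b div 2))"

definition marker_set :: "nat \<Rightarrow> nat set" where
  "marker_set b = set_decode (fst (prod_decode (snd (prod_decode (b div 2)))))"

definition marker_label :: "nat \<Rightarrow> nat" where
  "marker_label b = snd (prod_decode (snd (prod_decode (b div 2))))"

definition vertices :: "nat list \<Rightarrow> nat set" where
  "vertices t = {v. level v \<in> set t}"

lemma marker_decode [simp]:
  assumes "finite A"
  shows "marker_vertex (marker c A j) = c" "marker_set (marker c A j) = A"
    "marker_label (marker c A j) = j"
  using assms by (simp_all add: marker_vertex_def marker_set_def marker_label_def marker_def code_def)

lemma odd_marker [simp]: "odd (marker c A j)"
  by (simp add: marker_def)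

lemma even_level [simp]: "even (level c)"
  by (simp add: level_def)

lemma marker_notin_range_level [simp]: "marker c A j \<notin> range level"
  using odd_marker even_level by (metis image_iff)

lemma strict_mono_level: "strict_mono level"
  unfolding strict_mono_Suc_iff by (simp add: level_def)

lemma level_less_iff [simp]: "level a < level b \<longleftrightarrow> a < b"
  using strict_mono_level strict_mono_less by blast

lemma level_eq_iff [simp]: "level a = level b \<longleftrightarrow> a = b"
  using strict_mono_level strict_mono_eq by blast

lemma inj_level: "inj level"
  by (simp add: inj_def)

lemma marker_less_level:
  assumes "A \<subseteq> {..<c}" "j \<le> arity_bound c"
  shows "marker c A j < level c"
proof -
  have "code c A j \<le> code_bound c"
    unfolding code_bound_def using assms
    by (intro Max_ge) (auto intro!: image_eqI[where x = "(A, j)"])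
  moreover have "Suc (code_bound c) \<le> (\<Sum>i\<le>c. Suc (code_bound i))"
    by (rule member_le_sum) auto
  ultimately show ?thesis unfolding marker_def level_def by simp
qed

lemma nrel_le_arity_bound: "s \<le> k + c + 1 \<Longrightarrow> nrel s \<le> arity_bound c"
  unfolding arity_bound_def by (intro Max_ge) auto

lemma finite_vertices [simp]: "finite (vertices t)"
proof -
  have "vertices t = level -` set t" unfolding vertices_def by auto
  then show ?thesis by (simp add: finite_vimageI inj_level)
qed

lemma card_vertices_le: "card (vertices t) \<le> length t"
proof -
  have "card (vertices t) = card (level ` vertices t)"
    by (simp add: card_image inj_on_subset[OF inj_level])
  also have "\<dots> \<le> card (set t)" by (intro card_mono) (auto simp: vertices_def)
  also have "\<dots> \<le> length t" by (rule card_length)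
  finally show ?thesis .
qed

lemma card_vertices:
  assumes "set t \<subseteq> range level" "distinct t"
  shows "card (vertices t) = length t"
proof -
  have "card (vertices t) = card (level ` vertices t)"
    by (simp add: card_image inj_on_subset[OF inj_level])
  also have "level ` vertices t = set t" using assms(1) unfolding vertices_def by auto
  finally show ?thesis using assms(2) by (simp add: distinct_card)
qed

lemma vertices_append [simp]: "vertices (xs @ ys) = vertices xs \<union> vertices ys"
  by (auto simp: vertices_def)

lemma vertices_level_Cons [simp]: "vertices (level c # ys) = insert c (vertices ys)"
  by (auto simp: vertices_def)

lemma vertices_less: "t \<in> dec_tuples (level a) \<Longrightarrow> v \<in> vertices t \<Longrightarrow> v < a"
  unfolding dec_tuples_def vertices_def using level_less_iff by blast

lemma H_SomeD: "H S = Some j \<Longrightarrow> finite S \<and> 2 \<le> card S \<and> 1 \<le> j \<and> j \<le> nrel (card S)"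
  using is_Lhyp_H unfolding is_Lhyp_def by force

lemma sig_eq_below_edge: "H S = Some j \<Longrightarrow> r < card S \<Longrightarrow> sig nrel r = nrel (r + 1) + 2"
  using H_SomeD sig_eq_if_nrel_pos_above[of nrel "card S" r] by fastforce

text \<open>A marker \<open>marker c A j\<close> ending a marker tuple \<open>t\<close> of the image of \<open>a\<close> asks whether
\<open>{a} \<union> vertices (butlast t) \<union> {c} \<union> A\<close> is a hyperedge of H with label \<open>j\<close>.\<close>

definition marker_tuple :: "nat \<Rightarrow> nat list \<Rightarrow> bool" where
  "marker_tuple a t \<longleftrightarrow> t \<noteq> [] \<and> set (butlast t) \<subseteq> range level \<and> odd (last t) \<and>
     marker_set (last t) \<subseteq> {..<marker_vertex (last t)} \<and>
     (\<forall>v \<in> insert a (vertices (butlast t)). marker_vertex (last t) < v)"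

definition marker_edge :: "nat list \<Rightarrow> nat set" where
  "marker_edge t = vertices (butlast t) \<union> insert (marker_vertex (last t)) (marker_set (last t))"

definition label :: "nat \<Rightarrow> nat list \<Rightarrow> nat" where
  "label a t =
    (if t \<notin> dec_tuples (level a) then 0
     else if set t \<subseteq> range level then (case H (insert a (vertices t)) of Some j \<Rightarrow> j | None \<Rightarrow> 0)
     else if length t \<le> k \<and> marker_tuple a t \<and>
       H (insert a (marker_edge t)) = Some (marker_label (last t)) then 1 else 0)"

definition emb :: "nat \<Rightarrow> vf" where
  "emb a = (level a, label a)"

lemma label_levels:
  "t \<in> dec_tuples (level a) \<Longrightarrow> set t \<subseteq> range level \<Longrightarrow>
    label a t = (case H (insert a (vertices t)) of Some j \<Rightarrow> j | None \<Rightarrow> 0)"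
  unfolding label_def by (simp only: not_True_eq_False if_False if_True)

lemma label_not_levels:
  "t \<in> dec_tuples (level a) \<Longrightarrow> \<not> set t \<subseteq> range level \<Longrightarrow>
    label a t = (if length t \<le> k \<and> marker_tuple a t \<and>
       H (insert a (marker_edge t)) = Some (marker_label (last t)) then 1 else 0)"
  unfolding label_def by (simp only: not_True_eq_False if_False)

lemma fst_emb [simp]: "fst (emb a) = level a"
  by (simp add: emb_def)

lemma snd_emb [simp]: "snd (emb a) = label a"
  by (simp add: emb_def)

lemma inj_emb: "inj emb"
  by (auto simp: inj_def emb_def)

lemma vf_supported_emb: "vf_supported (emb a)"
  by (simp add: vf_supported_def label_def)

lemma label_edge_less_sig:
  assumes t: "t \<in> dec_tuples (level a)" and levels: "set t \<subseteq> range level"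
  shows "label a t < sig nrel (length t)"
proof (cases "H (insert a (vertices t))")
  case (Some j)
  have "a \<notin> vertices t" using vertices_less[OF t] by blast
  moreover have "distinct t" using t sorted_wrt_greater_distinct by (simp add: dec_tuples_def)
  ultimately have card: "card (insert a (vertices t)) = length t + 1"
    using card_vertices[OF levels] by simp
  then have "sig nrel (length t) = nrel (length t + 1) + 2"
    using sig_eq_below_edge[OF Some] by simp
  then show ?thesis using H_SomeD[OF Some] card t levels Some by (simp add: label_def)
qed (use t levels sig_pos in \<open>simp add: label_def\<close>)

lemma length_less_card_marker_edge:
  assumes t: "t \<in> dec_tuples (level a)" and marker: "marker_tuple a t"
    and fin: "finite (marker_edge t)"
  shows "length t < card (insert a (marker_edge t))"
proof -
  let ?b = "butlast t" and ?c = "marker_vertex (last t)"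
  have levels: "set ?b \<subseteq> range level" and c: "\<forall>v \<in> insert a (vertices ?b). ?c < v"
    using marker by (simp_all add: marker_tuple_def)
  have "distinct ?b" using t sorted_wrt_greater_distinct by (simp add: dec_tuples_def distinct_butlast)
  then have "card (vertices ?b) = length ?b" by (rule card_vertices[OF levels])
  moreover have "vertices ?b \<subseteq> vertices t"
    by (auto simp: vertices_def dest: in_set_butlastD)
  then have "a \<notin> vertices ?b" using vertices_less[OF t] by blast
  moreover have "?c \<notin> insert a (vertices ?b)" using c by blast
  moreover have "t \<noteq> []" using t by (simp add: dec_tuples_def)
  ultimately have eq: "card (insert ?c (insert a (vertices ?b))) = length t + 1" by simp
  have "card (insert ?c (insert a (vertices ?b))) \<le> card (insert a (marker_edge t))"
    by (rule card_mono) (use fin in \<open>auto simp: marker_edge_def\<close>)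
  then show ?thesis using eq by simp
qed

lemma label_not_levels_less_sig:
  assumes t: "t \<in> dec_tuples (level a)" and not_levels: "\<not> set t \<subseteq> range level"
  shows "label a t < sig nrel (length t)"
proof (cases "length t \<le> k \<and> marker_tuple a t \<and>
    H (insert a (marker_edge t)) = Some (marker_label (last t))")
  case True
  then have "length t < card (insert a (marker_edge t))"
    using length_less_card_marker_edge[OF t] H_SomeD[of "insert a (marker_edge t)"] by auto
  then have "sig nrel (length t) = nrel (length t + 1) + 2"
    using True sig_eq_below_edge[of "insert a (marker_edge t)"] by simp
  moreover have "label a t = 1" using label_not_levels[OF t not_levels] True by simp
  ultimately show ?thesis by simp
next
  case False
  then have "label a t = 0" using label_not_levels[OF t not_levels] by simp
  then show ?thesis using sig_pos by simp
qed

lemma emb_in_T0: "emb a \<in> Tlev nrel 0"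
  unfolding Tlev_def valfun_def
  using label_edge_less_sig label_not_levels_less_sig by (auto simp: label_def)

lemma lower_vertices_tuple:
  assumes "finite S" "2 \<le> card S"
  defines "t \<equiv> rev (sorted_list_of_set (level ` (S - {Max S})))"
  shows "t \<in> dec_tuples (level (Max S))" "set t \<subseteq> range level"
    "insert (Max S) (vertices t) = S"
proof -
  have "S \<noteq> {}" using assms(2) by auto
  then have S: "S \<noteq> {}" "Max S \<in> S" using assms(1) by auto
  have set_t: "set t = level ` (S - {Max S})" using assms(1) by (simp add: t_def)
  have "S - {Max S} \<noteq> {}"
  proof
    assume "S - {Max S} = {}"
    then have "card S \<le> card {Max S}" using card_mono[of "{Max S}" S] by auto
    then show False using assms(2) by simp
  qed
  moreover have "\<forall>x \<in> set t. x < level (Max S)"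
    using set_t assms(1) by (auto intro: le_neq_implies_less)
  ultimately show "t \<in> dec_tuples (level (Max S))"
    using set_t by (auto simp: dec_tuples_def t_def sorted_wrt_rev)
  show "set t \<subseteq> range level" using set_t by auto
  show "insert (Max S) (vertices t) = S" using set_t S by (auto simp: vertices_def)
qed

lemma Grel_image_emb: "Grel nrel (emb ` S) = H S"
proof (cases "finite S \<and> 2 \<le> card S")
  case False
  have "H S = None" using False H_SomeD by (cases "H S") auto
  moreover have "\<not> (finite (emb ` S) \<and> 2 \<le> card (emb ` S))"
    using False by (simp add: card_image finite_image_iff inj_on_subset[OF inj_emb])
  ultimately show ?thesis unfolding Grel_def by auto
next
  case True
  define a where "a = Max S"
  define t where "t = rev (sorted_list_of_set (level ` (S - {a})))"
  have t: "t \<in> dec_tuples (level a)" "set t \<subseteq> range level" "insert a (vertices t) = S"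
    using lower_vertices_tuple[of S] True unfolding a_def t_def by auto
  have "S \<noteq> {}" using True by auto
  then have aS: "a \<in> S" using True a_def by simp
  have card: "card (emb ` S) = card S" by (simp add: card_image inj_on_subset[OF inj_emb])
  have cond: "emb ` S \<subseteq> Tlev nrel 0 \<and> finite (emb ` S) \<and> 2 \<le> card (emb ` S) \<and> inj_on fst (emb ` S)"
    using emb_in_T0 True card by (auto simp: inj_on_def)
  have "Max (fst ` emb ` S) = level a"
    using True \<open>S \<noteq> {}\<close> unfolding a_def
    by (simp add: image_image mono_Max_commute strict_mono_mono[OF strict_mono_level])
  then have top: "(THE x. x \<in> emb ` S \<and> fst x = Max (fst ` emb ` S)) = emb a"
    by (intro the_equality) (auto simp: aS)
  have "emb ` S - {emb a} = emb ` (S - {a})" by (simp add: image_set_diff[OF inj_emb])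
  then have "fst ` (emb ` S - {emb a}) = level ` (S - {a})" by (simp add: image_image)
  then have "Grel nrel (emb ` S) =
      (if 1 \<le> label a t \<and> label a t \<le> nrel (card S) then Some (label a t) else None)"
    unfolding Grel_def Let_def
    by (simp only: if_P[OF cond] if_P[OF cond[unfolded card]] top t_def snd_emb card)
  moreover have "label a t = (case H S of Some j \<Rightarrow> j | None \<Rightarrow> 0)"
    using label_levels[OF t(1,2)] t(3) by simp
  ultimately show ?thesis using H_SomeD by (cases "H S") auto
qed

lemma is_embedding_emb: "is_embedding nrel H emb"
  unfolding is_embedding_def enum_less_def by (simp add: emb_in_T0 Grel_image_emb)

lemma slice_emb_below:
  assumes ok: "slice_ok (emb a) xs" and c: "level c < fst (slice (emb a) xs)"
  shows "c < a" "\<forall>v \<in> vertices xs. c < v"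
proof -
  have xs: "sorted_wrt (>) xs" "\<forall>x\<in>set xs. x < level a" using ok by (auto simp: slice_ok_def)
  show "c < a"
  proof (cases "xs = []")
    case False
    then have "level c < last xs" "last xs < level a" using c xs by (simp_all add: fst_slice)
    then have "level c < level a" by linarith
    then show ?thesis by simp
  qed (use c in \<open>simp add: fst_slice\<close>)
  show "\<forall>v \<in> vertices xs. c < v"
  proof
    fix v assume "v \<in> vertices xs"
    then have v: "level v \<in> set xs" by (simp add: vertices_def)
    then have "xs \<noteq> []" by auto
    then have "level c < last xs" using c by (simp add: fst_slice)
    moreover have "last xs \<le> level v" using sorted_wrt_greater_last_le[OF xs(1) v] .
    ultimately have "level c < level v" by linarith
    then show "c < v" by simp
  qed
qed

lemma card_extended_edge_le:
  assumes "length xs < k" "A \<subseteq> {..<c}"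
  shows "card (insert a (vertices xs) \<union> insert c A) \<le> k + c + 1"
proof -
  have "card A \<le> c" using card_mono[OF _ assms(2)] by simp
  have "card (insert a (vertices xs) \<union> insert c A) \<le> card (insert a (vertices xs)) + card (insert c A)"
    by (rule card_Un_le)
  also have "\<dots> \<le> Suc (card (vertices xs)) + Suc (card A)"
    by (intro add_mono card_insert_le_m1) auto
  also have "\<dots> \<le> Suc (length xs) + Suc c"
    using card_vertices_le[of xs] \<open>card A \<le> c\<close> by simp
  finally show ?thesis using assms(1) by simp
qed

lemma marker_less_level_if_edge:
  assumes "H (insert a (vertices xs) \<union> insert c A) = Some j" "length xs < k" "A \<subseteq> {..<c}"
  shows "marker c A j < level c"
proof -
  have "j \<le> nrel (card (insert a (vertices xs) \<union> insert c A))" using H_SomeD[OF assms(1)] by simp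
  also have "\<dots> \<le> arity_bound c" by (rule nrel_le_arity_bound[OF card_extended_edge_le[OF assms(2,3)]])
  finally show ?thesis by (rule marker_less_level[OF assms(3)])
qed

definition marker_bit :: "nat \<Rightarrow> vf \<Rightarrow> nat \<Rightarrow> bool" where
  "marker_bit c F b \<longleftrightarrow> b < level c \<and> snd F [b] = 1"

lemma slice_emb_marker_bit:
  assumes ok: "slice_ok (emb a) xs" and levels: "set xs \<subseteq> range level" and len: "length xs < k"
    and c: "level c < fst (slice (emb a) xs)" and A: "A \<subseteq> {..<c}"
  shows "marker_bit c (slice (emb a) xs) (marker c A j) \<longleftrightarrow>
    H (insert a (vertices xs) \<union> insert c A) = Some j"
proof (cases "marker c A j < level c")
  case True
  have fin: "finite A" using A finite_subset by blast
  let ?t = "xs @ [marker c A j]"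
  have m: "[marker c A j] \<in> dec_tuples (fst (slice (emb a) xs))"
    using True c by (simp add: dec_tuples_def)
  have "?t \<in> dec_tuples (level a)" using append_in_dec_tuples_slice[OF ok m] by simp
  moreover have "\<not> set ?t \<subseteq> range level" by simp
  moreover have "marker_tuple a ?t"
    unfolding marker_tuple_def using levels fin A slice_emb_below[OF ok c] by auto
  moreover have "insert a (marker_edge ?t) = insert a (vertices xs) \<union> insert c A"
    unfolding marker_edge_def using fin by auto
  ultimately have "label a ?t = (if H (insert a (vertices xs) \<union> insert c A) = Some j then 1 else 0)"
    using label_not_levels[of ?t a] len fin by (simp only: length_append_singleton last_snoc) simp
  then show ?thesis using True snd_slice[OF m] by (simp add: marker_bit_def)
qed (use marker_less_level_if_edge[OF _ len A] in \<open>auto simp: marker_bit_def\<close>)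

text \<open>The value of a slice of length \<open>m\<close> at \<open>level c # ws\<close>, read off from its values at
marker positions below \<open>level c\<close>.\<close>

definition extension_value :: "nat \<Rightarrow> nat \<Rightarrow> nat list \<Rightarrow> vf \<Rightarrow> nat" where
  "extension_value m c ws F =
    (if set ws \<subseteq> range level then
       (if \<exists>j. marker_bit c F (marker c (vertices ws) j)
        then SOME j. marker_bit c F (marker c (vertices ws) j) else 0)
     else if m + 1 + length ws \<le> k \<and> marker_tuple c ws \<and>
       marker_bit c F (marker c (marker_edge ws) (marker_label (last ws))) then 1 else 0)"

lemma marker_bit_cong:
  "\<forall>t \<in> dec_tuples (level c). snd F t = snd G t \<Longrightarrow> marker_bit c F = marker_bit c G"
  by (auto simp: fun_eq_iff marker_bit_def dec_tuples_def)

lemma extension_value_cong: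
  "\<forall>t \<in> dec_tuples (level c). snd F t = snd G t \<Longrightarrow> extension_value m c ws F = extension_value m c ws G"
  by (drule marker_bit_cong) (simp add: extension_value_def)

lemma extension_value_zero: "const_zero F \<Longrightarrow> extension_value m c ws F = 0"
  by (simp add: extension_value_def marker_bit_def const_zero_def)

lemma marker_tuple_append_iff:
  assumes "set xs \<subseteq> range level" "c < a" "\<forall>v \<in> vertices xs. c < v"
  shows "marker_tuple a (xs @ level c # ws) \<longleftrightarrow> marker_tuple c ws"
proof (cases "ws = []")
  case False
  have "butlast (xs @ level c # ws) = xs @ level c # butlast ws" "last (xs @ level c # ws) = last ws"
    using False by (simp_all add: butlast_append)
  then show ?thesis using assms False unfolding marker_tuple_def by (auto dest: less_trans)
qed (simp add: marker_tuple_def)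

lemma marker_edge_append:
  "ws \<noteq> [] \<Longrightarrow> marker_edge (xs @ level c # ws) = vertices xs \<union> insert c (marker_edge ws)"
  by (auto simp: marker_edge_def butlast_append)

lemma marker_edge_less:
  assumes "marker_tuple c ws" "\<forall>x \<in> set ws. x < level c"
  shows "marker_edge ws \<subseteq> {..<c}"
proof -
  have "vertices (butlast ws) \<subseteq> {..<c}"
    using assms(2) level_less_iff by (fastforce simp: vertices_def dest: in_set_butlastD)
  then show ?thesis using assms(1) unfolding marker_edge_def marker_tuple_def by auto
qed

lemma slice_emb_extension:
  assumes ok: "slice_ok (emb a) xs" and levels: "set xs \<subseteq> range level" and len: "length xs < k"
    and c: "level c < fst (slice (emb a) xs)" and w: "level c # ws \<in> dec_tuples (fst (slice (emb a) xs))"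
  shows "snd (slice (emb a) xs) (level c # ws) = extension_value (length xs) c ws (slice (emb a) xs)"
proof -
  let ?F = "slice (emb a) xs" and ?t = "xs @ level c # ws" and ?S = "insert a (vertices xs)"
  have bit: "marker_bit c ?F (marker c A j) \<longleftrightarrow> H (?S \<union> insert c A) = Some j"
    if "A \<subseteq> {..<c}" for A j
    using slice_emb_marker_bit[OF ok levels len c that] .
  have slice_value: "snd ?F (level c # ws) = label a ?t" using snd_slice[OF w] by simp
  have t: "?t \<in> dec_tuples (level a)" using append_in_dec_tuples_slice[OF ok w] by simp
  have ws: "\<forall>x \<in> set ws. x < level c" using w by (simp add: dec_tuples_def)
  show ?thesis
  proof (cases "set ws \<subseteq> range level")
    case True
    have "vertices ws \<subseteq> {..<c}" using ws by (auto simp: vertices_def)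
    then have extension: "extension_value (length xs) c ws ?F =
        (if \<exists>j. H (?S \<union> insert c (vertices ws)) = Some j
         then SOME j. H (?S \<union> insert c (vertices ws)) = Some j else 0)"
      using True bit by (simp add: extension_value_def)
    moreover have "set ?t \<subseteq> range level" using True levels by simp
    moreover have "insert a (vertices ?t) = ?S \<union> insert c (vertices ws)" by auto
    ultimately have "label a ?t = (case H (?S \<union> insert c (vertices ws)) of Some j \<Rightarrow> j | None \<Rightarrow> 0)"
      using label_levels[OF t] by simp
    then show ?thesis using extension slice_value by (cases "H (?S \<union> insert c (vertices ws))") auto
  next
    case False
    then have "ws \<noteq> []" by auto
    have marker: "marker_tuple a ?t \<longleftrightarrow> marker_tuple c ws"
      using marker_tuple_append_iff[OF levels slice_emb_below[OF ok c]] .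
    have "label a ?t = (if length xs + 1 + length ws \<le> k \<and> marker_tuple c ws \<and>
        H (?S \<union> insert c (marker_edge ws)) = Some (marker_label (last ws)) then 1 else 0)"
    proof -
      have "insert a (marker_edge ?t) = ?S \<union> insert c (marker_edge ws)"
        using marker_edge_append[OF \<open>ws \<noteq> []\<close>] by auto
      moreover have "\<not> set ?t \<subseteq> range level" "last ?t = last ws" "length ?t = length xs + 1 + length ws"
        using False \<open>ws \<noteq> []\<close> by auto
      ultimately show ?thesis using label_not_levels[OF t] marker by simp
    qed
    moreover have "extension_value (length xs) c ws ?F =
        (if length xs + 1 + length ws \<le> k \<and> marker_tuple c ws \<and>
         H (?S \<union> insert c (marker_edge ws)) = Some (marker_label (last ws)) then 1 else 0)"
      using False bit marker_edge_less[OF _ ws] by (auto simp: extension_value_def)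
    ultimately show ?thesis using slice_value by simp
  qed
qed

lemma slice_emb_const_zero:
  assumes ok: "slice_ok (emb a) xs" and "\<not> set xs \<subseteq> range level"
  shows "const_zero (slice (emb a) xs)"
  unfolding const_zero_def
proof
  fix t
  show "snd (slice (emb a) xs) t = 0"
  proof (cases "t \<in> dec_tuples (fst (slice (emb a) xs))")
    case True
    then have "t \<noteq> []" by (simp add: dec_tuples_def)
    then have "\<not> marker_tuple a (xs @ t)"
      using assms(2) by (auto simp: marker_tuple_def butlast_append)
    then show ?thesis
      using snd_slice[OF True] label_not_levels[OF append_in_dec_tuples_slice[OF ok True, simplified]]
        assms(2) by simp
  qed (use vf_supported_slice[OF vf_supported_emb] in \<open>simp add: vf_supported_def\<close>)
qed

definition extension_determined :: "nat \<Rightarrow> vf \<Rightarrow> bool" where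
  "extension_determined m F \<longleftrightarrow> vf_supported F \<and>
     (\<forall>c ws. level c < fst F \<longrightarrow> level c # ws \<in> dec_tuples (fst F) \<longrightarrow>
        snd F (level c # ws) = extension_value m c ws F)"

lemma const_zero_slice: "const_zero g \<Longrightarrow> const_zero (slice g ys)"
  by (simp add: const_zero_def slice_def)

lemma extension_determined_const_zero:
  "vf_supported F \<Longrightarrow> const_zero F \<Longrightarrow> extension_determined m F"
  by (simp add: extension_determined_def extension_value_zero) (simp add: const_zero_def)

lemma extension_determined_slice_emb:
  assumes "slice_ok (emb a) xs" "length xs < k"
  shows "extension_determined (length xs) (slice (emb a) xs)"
proof (cases "set xs \<subseteq> range level")
  case True
  then show ?thesis using slice_emb_extension[OF assms(1) True assms(2)]
    by (simp add: extension_determined_def vf_supported_slice vf_supported_emb)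
next
  case False
  then show ?thesis
    using extension_determined_const_zero slice_emb_const_zero[OF assms(1)]
      vf_supported_slice[OF vf_supported_emb] by blast
qed

lemma dec_tuples_mono: "l \<le> n \<Longrightarrow> dec_tuples l \<subseteq> dec_tuples n"
  by (auto simp: dec_tuples_def)

lemma meet_level_notin_range_level:
  assumes F: "extension_determined m F" and G: "extension_determined m G"
    and "\<not> vf_le F G" "\<not> vf_le G F"
  shows "meet_level F G \<notin> range level"
proof
  assume "meet_level F G \<in> range level"
  then obtain c where "meet_level F G = level c" by blast
  moreover have "meet_level F G \<noteq> level c"
  proof (rule meet_level_neq)
    show "vf_supported F" "vf_supported G" using F G by (simp_all add: extension_determined_def)
    assume less: "level c < fst F" "level c < fst G"
      and agree: "\<forall>t \<in> dec_tuples (level c). snd F t = snd G t"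
    show "\<forall>ws. level c # ws \<in> dec_tuples (Suc (level c)) \<longrightarrow> snd F (level c # ws) = snd G (level c # ws)"
    proof (intro allI impI)
      fix ws assume "level c # ws \<in> dec_tuples (Suc (level c))"
      then have "level c # ws \<in> dec_tuples (fst F)" "level c # ws \<in> dec_tuples (fst G)"
        using dec_tuples_mono[OF Suc_leI[OF less(1)]] dec_tuples_mono[OF Suc_leI[OF less(2)]] by auto
      then show "snd F (level c # ws) = snd G (level c # ws)"
        using F G less extension_value_cong[OF agree]
        unfolding extension_determined_def by metis
    qed
  qed fact+
  ultimately show False by contradiction
qed

lemma k_enveloping_emb: "k_enveloping nrel H k emb"
  unfolding k_enveloping_def
proof (intro conjI exI ballI allI impI)
  show "is_embedding nrel H emb" by (rule is_embedding_emb)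
  show "range level \<union> - range level = UNIV" "range level \<inter> - range level = {}" by auto
  fix f m xs assume "f \<in> range emb" and m: "m < k" and xs: "length xs = m \<and> slice_ok f xs"
  then obtain a where a: "f = emb a" by blast
  show "set xs \<subseteq> range level" if "\<not> const_zero (slice f xs)"
    using that slice_emb_const_zero xs a by blast
  have F: "extension_determined m (slice f xs)"
    using extension_determined_slice_emb xs m a by blast
  fix g ys
  assume g: "g \<in> range emb \<or> g \<in> Tlev nrel 0 \<and> const_zero g" and "length ys = m"
    and "slice_ok g ys" "\<not> vf_le (slice f xs) (slice g ys)" "\<not> vf_le (slice g ys) (slice f xs)"
  moreover have "vf_supported g" if "g \<in> Tlev nrel 0"
    using that by (simp add: Tlev_def valfun_def vf_supported_def)
  ultimately have "extension_determined m (slice g ys)"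
    using extension_determined_slice_emb extension_determined_const_zero const_zero_slice
      vf_supported_slice m by blast
  then show "meet_level (slice f xs) (slice g ys) \<in> - range level"
    using meet_level_notin_range_level F
      \<open>\<not> vf_le (slice f xs) (slice g ys)\<close> \<open>\<not> vf_le (slice g ys) (slice f xs)\<close> by blast
qed

end

theorem lemma4p4:
  fixes nrel :: "nat \<Rightarrow> nat" and H :: "nat set \<Rightarrow> nat option"
  assumes "nrel 0 = 0" and "nrel 1 = 0"
    and "universal_Lhyp nrel H"
  shows "\<forall>k::nat. \<exists>\<phi>. k_enveloping nrel H k \<phi>"
proof
  fix k :: nat
  interpret enveloping_construction nrel H k
    using assms(3) by unfold_locales (simp add: universal_Lhyp_def)
  show "\<exists>\<phi>. k_enveloping nrel H k \<phi>" using k_enveloping_emb by blast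
qed

end
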